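(* If $M$ is a Noetherian commutative monoid, then the terminal space $\mathcal S(M)$ is a Noetherian topological space (every descending chain of closed subsets stabilizes).
   Context: A monoid is a commutative monoid $(M,\cdot,1)$. An ideal of $M$ is a subset $I\subseteq M$ such that $im\in I$ for all $i\in I$, $m\in M$; it is proper if $I\neq M$. $M$ is Noetherian if it satisfies the ascending chain condition on ideals. A proper ideal $K$ of $M$ is strongly irreducible if for all ideals $I,J$ of $M$, $I\cap J\subseteq K$ implies $I\subseteq K$ or $J\subseteq K$. $\mathcal S(M)$ is the set of all strongly irreducible ideals of $M$. For $X\subseteq\mathcal S(M)$, $\mathcal K(X)=\bigcap_{I\in X}I$, and $\mathcal{HK}(X)=\{J\in\mathcal S(M)\mid J\supseteq\mathcal K(X)\}$ if $X\neq\emptyset$, $\mathcal{HK}(\emptyset)=\emptyset$. The terminal space of $M$ is the set $\mathcal S(M)$ with the topology whose closed sets are exactly the sets $\mathcal{HK}(X)$, $X\subseteq\mathcal S(M)$. *)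

theory Defs
  imports "HOL-Analysis.Abstract_Topology"
begin

text \<open>The monoid M is the whole carrier of a type of class comm_monoid_mult.\<close>

definition monoid_ideal :: "'a::comm_monoid_mult set \<Rightarrow> bool" where
  "monoid_ideal I \<longleftrightarrow> (\<forall>i\<in>I. \<forall>m. i * m \<in> I)"

definition noetherian_monoid :: "'a::comm_monoid_mult itself \<Rightarrow> bool" where
  "noetherian_monoid TYPE('a) \<longleftrightarrow>
     (\<forall>f :: nat \<Rightarrow> 'a set. (\<forall>n. monoid_ideal (f n)) \<and> (\<forall>n. f n \<subseteq> f (Suc n))
        \<longrightarrow> (\<exists>N. \<forall>n\<ge>N. f n = f N))"

definition strongly_irreducible :: "'a::comm_monoid_mult set \<Rightarrow> bool" where
  "strongly_irreducible K \<longleftrightarrow> monoid_ideal K \<and> K \<noteq> UNIV \<and>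
     (\<forall>I J. monoid_ideal I \<longrightarrow> monoid_ideal J \<longrightarrow> I \<inter> J \<subseteq> K \<longrightarrow> I \<subseteq> K \<or> J \<subseteq> K)"

definition SI :: "'a::comm_monoid_mult set set" where
  "SI = {K. strongly_irreducible K}"

definition KK :: "'a::comm_monoid_mult set set \<Rightarrow> 'a set" where
  "KK X = \<Inter>X"

definition HK :: "'a::comm_monoid_mult set set \<Rightarrow> 'a set set" where
  "HK X = (if X = {} then {} else {J \<in> SI. KK X \<subseteq> J})"

definition terminal_closed :: "'a::comm_monoid_mult set set \<Rightarrow> bool" where
  "terminal_closed C \<longleftrightarrow> (\<exists>X. X \<subseteq> SI \<and> C = HK X)"

definition terminal_space :: "'a::comm_monoid_mult set topology" where
  "terminal_space = topology (\<lambda>U. U \<subseteq> SI \<and> terminal_closed (SI - U))"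

definition noetherian_space :: "'b topology \<Rightarrow> bool" where
  "noetherian_space T \<longleftrightarrow>
     (\<forall>C :: nat \<Rightarrow> 'b set. (\<forall>n. closedin T (C n)) \<and> (\<forall>n. C (Suc n) \<subseteq> C n)
        \<longrightarrow> (\<exists>N. \<forall>n\<ge>N. C n = C N))"

end

theory Submission
  imports Defs
begin

text \<open>A closed set C of the terminal space is recovered from the ideal \<Inter>C as the set of strongly
  irreducible ideals containing it, and shrinking C enlarges \<Inter>C. A descending chain of closed
  sets therefore yields an ascending chain of ideals, which stabilises because the monoid is
  Noetherian, and the closed sets stabilise with it.\<close>

lemma monoid_ideal_Inter:
  assumes "\<And>I. I \<in> A \<Longrightarrow> monoid_ideal I"
  shows "monoid_ideal (\<Inter>A)"
  using assms unfolding monoid_ideal_def by blast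

lemma SI_monoid_ideal: "J \<in> SI \<Longrightarrow> monoid_ideal J"
  unfolding SI_def strongly_irreducible_def by blast

lemma SI_not_UNIV_subset: "J \<in> SI \<Longrightarrow> \<not> UNIV \<subseteq> J"
  unfolding SI_def strongly_irreducible_def by blast

lemma SI_Int_subsetD:
  "J \<in> SI \<Longrightarrow> monoid_ideal A \<Longrightarrow> monoid_ideal B \<Longrightarrow> A \<inter> B \<subseteq> J \<Longrightarrow> A \<subseteq> J \<or> B \<subseteq> J"
  unfolding SI_def strongly_irreducible_def by blast

lemma terminal_closed_iff:
  "terminal_closed C \<longleftrightarrow> C \<subseteq> SI \<and> (\<forall>J\<in>SI. \<Inter>C \<subseteq> J \<longrightarrow> J \<in> C)"
proof
  assume "terminal_closed C"
  then obtain X where "X \<subseteq> SI" "C = HK X"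
    unfolding terminal_closed_def by blast
  then show "C \<subseteq> SI \<and> (\<forall>J\<in>SI. \<Inter>C \<subseteq> J \<longrightarrow> J \<in> C)"
    using SI_not_UNIV_subset by (cases "X = {}") (auto simp: HK_def KK_def)
next
  assume C: "C \<subseteq> SI \<and> (\<forall>J\<in>SI. \<Inter>C \<subseteq> J \<longrightarrow> J \<in> C)"
  then have "C = HK C"
    using SI_not_UNIV_subset by (auto simp: HK_def KK_def)
  with C show "terminal_closed C"
    unfolding terminal_closed_def by blast
qed

lemma monoid_ideal_Inter_terminal_closed: "terminal_closed C \<Longrightarrow> monoid_ideal (\<Inter>C)"
  unfolding terminal_closed_iff by (blast intro: monoid_ideal_Inter SI_monoid_ideal)

lemma terminal_closed_eqI:
  assumes "terminal_closed C" "terminal_closed D" "\<Inter>C = \<Inter>D"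
  shows "C = D"
proof -
  have "C = {J \<in> SI. \<Inter>C \<subseteq> J}" "D = {J \<in> SI. \<Inter>D \<subseteq> J}"
    using assms(1,2) unfolding terminal_closed_iff by blast+
  with assms(3) show ?thesis
    by simp
qed

lemma terminal_closed_Un:
  assumes C: "terminal_closed C" and D: "terminal_closed D"
  shows "terminal_closed (C \<union> D)"
  unfolding terminal_closed_iff
proof (intro conjI ballI impI)
  show "C \<union> D \<subseteq> SI"
    using C D by (simp add: terminal_closed_iff)
  fix J
  assume J: "J \<in> SI" "\<Inter>(C \<union> D) \<subseteq> J"
  have "monoid_ideal (\<Inter>C)" "monoid_ideal (\<Inter>D)"
    using C D by (simp_all add: monoid_ideal_Inter_terminal_closed)
  moreover have "\<Inter>C \<inter> \<Inter>D \<subseteq> J"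
    using J(2) by auto
  ultimately have "\<Inter>C \<subseteq> J \<or> \<Inter>D \<subseteq> J"
    using SI_Int_subsetD[OF J(1)] by blast
  then show "J \<in> C \<union> D"
    using C D J(1) by (auto simp: terminal_closed_iff)
qed

lemma terminal_closed_Inter:
  assumes "\<And>C. C \<in> F \<Longrightarrow> terminal_closed C"
  shows "terminal_closed (SI \<inter> \<Inter>F)"
  unfolding terminal_closed_iff
proof (intro conjI ballI impI)
  fix J
  assume J: "J \<in> SI" "\<Inter>(SI \<inter> \<Inter>F) \<subseteq> J"
  have "J \<in> C" if "C \<in> F" for C
  proof -
    have "\<Inter>C \<subseteq> \<Inter>(SI \<inter> \<Inter>F)"
      using that by blast
    with J assms[OF that] show ?thesis
      by (auto simp: terminal_closed_iff)
  qed
  with J(1) show "J \<in> SI \<inter> \<Inter>F"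
    by blast
qed blast

lemma istopology_terminal_space:
  "istopology (\<lambda>U. U \<subseteq> SI \<and> terminal_closed (SI - U))"
  unfolding istopology_def
proof (rule conjI; intro allI impI)
  fix S T :: "'a::comm_monoid_mult set set"
  assume S: "S \<subseteq> SI \<and> terminal_closed (SI - S)" and T: "T \<subseteq> SI \<and> terminal_closed (SI - T)"
  have "SI - S \<inter> T = (SI - S) \<union> (SI - T)"
    by blast
  moreover have "terminal_closed ((SI - S) \<union> (SI - T))"
    using S T by (blast intro: terminal_closed_Un)
  ultimately show "S \<inter> T \<subseteq> SI \<and> terminal_closed (SI - S \<inter> T)"
    using S by auto
next
  fix K :: "'a::comm_monoid_mult set set set"
  assume K: "\<forall>S\<in>K. S \<subseteq> SI \<and> terminal_closed (SI - S)"
  have "SI - \<Union>K = SI \<inter> \<Inter>((\<lambda>S. SI - S) ` K)"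
    by blast
  moreover have "terminal_closed (SI \<inter> \<Inter>((\<lambda>S. SI - S) ` K))"
    using K by (intro terminal_closed_Inter) blast
  ultimately show "\<Union>K \<subseteq> SI \<and> terminal_closed (SI - \<Union>K)"
    using K by auto
qed

lemma openin_terminal_space:
  "openin terminal_space U \<longleftrightarrow> U \<subseteq> SI \<and> terminal_closed (SI - U)"
  unfolding terminal_space_def topology_inverse'[OF istopology_terminal_space] ..

lemma topspace_terminal_space: "topspace terminal_space = SI"
proof -
  have "terminal_closed (SI - SI)"
    by (simp add: terminal_closed_iff SI_not_UNIV_subset)
  then have "openin terminal_space SI"
    by (simp add: openin_terminal_space)
  then show ?thesis
    unfolding topspace_def using openin_terminal_space by blast
qed

lemma closedin_terminal_space: "closedin terminal_space C \<longleftrightarrow> terminal_closed C"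
proof -
  have "C \<subseteq> SI \<Longrightarrow> SI - (SI - C) = C"
    by blast
  then show ?thesis
    unfolding closedin_def topspace_terminal_space openin_terminal_space
    by (auto simp: terminal_closed_iff)
qed

theorem proposition2p10:
  assumes "noetherian_monoid TYPE('a::comm_monoid_mult)"
  shows "noetherian_space (terminal_space :: 'a set topology)"
  unfolding noetherian_space_def
proof (intro allI impI)
  fix C :: "nat \<Rightarrow> 'a set set"
  assume "(\<forall>n. closedin terminal_space (C n)) \<and> (\<forall>n. C (Suc n) \<subseteq> C n)"
  then have closed: "\<And>n. terminal_closed (C n)" and desc: "\<And>n. C (Suc n) \<subseteq> C n"
    by (auto simp: closedin_terminal_space)
  have "monoid_ideal (\<Inter>(C n))" for n
    using closed by (rule monoid_ideal_Inter_terminal_closed)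
  moreover have "\<Inter>(C n) \<subseteq> \<Inter>(C (Suc n))" for n
    using desc[of n] by blast
  ultimately obtain N where N: "\<forall>n\<ge>N. \<Inter>(C n) = \<Inter>(C N)"
    using assms unfolding noetherian_monoid_def by (elim allE[of _ "\<lambda>n. \<Inter>(C n)"]) blast
  have "C n = C N" if "n \<ge> N" for n
    using N that by (auto intro!: terminal_closed_eqI[OF closed closed])
  then show "\<exists>N. \<forall>n\<ge>N. C n = C N"
    by blast
qed

end
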